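(* Let $\alpha>0$ and let $Y,y\in\mathbb{R}$ satisfy $-Y\leq y\leq Y$. Define $g_{\alpha,Y}:\mathbb{R}\to\mathbb{R}$ by $$g_{\alpha,Y}(z)=\operatorname{sign}(z)\left(Y\sqrt{\alpha |z|+1}-Y\right),$$ that is, $g_{\alpha,Y}(z)=Y\sqrt{\alpha z+1}-Y$ for $z\geq 0$ and $g_{\alpha,Y}(z)=-Y\sqrt{-\alpha z+1}+Y$ for $z<0$. Then the function $z\mapsto l_y(g_{\alpha,Y}(z))=(g_{\alpha,Y}(z)-y)^2$ is convex on $\mathbb{R}$.
   Context: Here $l_y(\hat y)=(\hat y-y)^2$ denotes the square (L2) loss of a prediction $\hat y$ against the target $y$, and $\operatorname{sign}(z)$ is $1$ for $z>0$, $-1$ for $z<0$, and $0$ for $z=0$. *)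

theory Defs
  imports "HOL-Analysis.Analysis"
begin

definition sq_loss :: "real \<Rightarrow> real \<Rightarrow> real" where
  "sq_loss y yhat = (yhat - y)^2"

definition g_fun :: "real \<Rightarrow> real \<Rightarrow> real \<Rightarrow> real" where
  "g_fun \<alpha> Y z = sgn z * (Y * sqrt (\<alpha> * \<bar>z\<bar> + 1) - Y)"

end

theory Submission
  imports Defs
begin

text \<open>
  Rationalizing gives \<open>g(z) = Y \<alpha> z / (\<surd>(\<alpha>|z|+1) + 1)\<close>, so \<open>g\<close> is differentiable
  everywhere, including at 0, with \<open>g'(z) = Y \<alpha> / (2 \<surd>(\<alpha>|z|+1))\<close>. Hence the loss has
  derivative \<open>Y \<alpha> (g(z) - y) / \<surd>(\<alpha>|z|+1)\<close>. The quotient equals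
  \<open>Y - (Y + y) / \<surd>(\<alpha>z+1)\<close> for \<open>z \<ge> 0\<close> and \<open>-Y + (Y - y) / \<surd>(1-\<alpha>z)\<close> for \<open>z < 0\<close>;
  since \<open>|y| \<le> Y\<close> both branches are nondecreasing and they are separated by \<open>-y\<close>. A
  nondecreasing derivative makes the loss convex.
\<close>

lemma g_fun_rationalized:
  fixes \<alpha> Y z :: real
  assumes "\<alpha> \<ge> 0"
  shows "g_fun \<alpha> Y z = Y * \<alpha> * z / (sqrt (\<alpha> * \<bar>z\<bar> + 1) + 1)"
proof -
  define s where "s = sqrt (\<alpha> * \<bar>z\<bar> + 1)"
  have radicand_nonneg: "0 \<le> \<alpha> * \<bar>z\<bar> + 1"
    using assms by (auto intro!: add_nonneg_nonneg)
  then have "s\<^sup>2 = \<alpha> * \<bar>z\<bar> + 1"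
    unfolding s_def by simp
  moreover have "s \<ge> 0"
    unfolding s_def using radicand_nonneg by simp
  ultimately have s_minus_1: "s - 1 = \<alpha> * \<bar>z\<bar> / (s + 1)"
    by (simp add: field_simps power2_eq_square)
  have "g_fun \<alpha> Y z = sgn z * Y * (s - 1)"
    by (simp add: g_fun_def s_def algebra_simps)
  also have "\<dots> = Y * \<alpha> * (sgn z * \<bar>z\<bar>) / (s + 1)"
    unfolding s_minus_1 by simp
  finally show ?thesis
    by (simp add: s_def sgn_mult_abs)
qed

lemma has_real_derivative_g_fun:
  fixes \<alpha> Y x :: real
  assumes "\<alpha> \<ge> 0"
  shows "(g_fun \<alpha> Y has_real_derivative Y * \<alpha> / (2 * sqrt (\<alpha> * \<bar>x\<bar> + 1))) (at x)"
proof (cases "x = 0")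
  case True
  define k where "k z = Y * \<alpha> / (sqrt (\<alpha> * \<bar>z\<bar> + 1) + 1)" for z
  have "g_fun \<alpha> Y z - g_fun \<alpha> Y 0 = k z * (z - 0)" for z
    using g_fun_rationalized[OF assms] by (simp add: k_def)
  moreover have "isCont k 0"
    unfolding k_def using assms by (intro continuous_intros) (auto intro!: add_nonneg_pos)
  moreover have "k 0 = Y * \<alpha> / (2 * sqrt (\<alpha> * \<bar>0\<bar> + 1))"
    by (simp add: k_def)
  ultimately show ?thesis
    unfolding True CARAT_DERIV by blast
next
  case False
  define \<sigma> where "\<sigma> = sgn x"
  have \<sigma>2: "\<sigma> * \<sigma> = 1" and \<sigma>x: "\<sigma> * x = \<bar>x\<bar>"
    using False by (auto simp: \<sigma>_def sgn_if)
  have "0 < \<alpha> * \<bar>x\<bar> + 1"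
    using assms by (simp add: add_nonneg_pos)
  then have "((\<lambda>z. \<sigma> * (Y * sqrt (\<alpha> * (\<sigma> * z) + 1) - Y)) has_real_derivative
          Y * \<alpha> / (2 * sqrt (\<alpha> * \<bar>x\<bar> + 1))) (at x)"
    using assms \<sigma>2 \<sigma>x by (auto intro!: derivative_eq_intros) (simp add: divide_simps)
  then show ?thesis
  proof (rule has_field_derivative_transform_within_open[where S = "{z. 0 < \<sigma> * z}"])
    show "open {z. 0 < \<sigma> * z}"
      by (intro open_Collect_less continuous_intros)
    show "x \<in> {z. 0 < \<sigma> * z}"
      using False \<sigma>x by simp
    show "\<sigma> * (Y * sqrt (\<alpha> * (\<sigma> * z) + 1) - Y) = g_fun \<alpha> Y z" if "z \<in> {z. 0 < \<sigma> * z}" for z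
      using that False by (auto simp: g_fun_def \<sigma>_def sgn_if zero_less_mult_iff)
  qed
qed

lemma mono_g_fun_residual_over_sqrt:
  fixes \<alpha> Y y :: real
  assumes "\<alpha> \<ge> 0" and "-Y \<le> y" and "y \<le> Y"
  shows "mono (\<lambda>z. (g_fun \<alpha> Y z - y) / sqrt (\<alpha> * \<bar>z\<bar> + 1))"
proof -
  define s where "s z = sqrt (\<alpha> * \<bar>z\<bar> + 1)" for z
  define h where "h z = (g_fun \<alpha> Y z - y) / s z" for z
  have s_ge_1: "1 \<le> s z" for z
    unfolding s_def using assms(1) by simp
  have s_mono: "s x \<le> s z" if "\<bar>x\<bar> \<le> \<bar>z\<bar>" for x z
    unfolding s_def using that assms(1) by (simp add: mult_left_mono)
  have h_nonneg: "h z = Y - (Y + y) / s z" if "0 \<le> z" for z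
    using s_ge_1[of z] that unfolding h_def g_fun_def s_def[symmetric]
    by (cases "z = 0") (auto simp: field_simps s_def)
  have h_neg: "h z = - Y + (Y - y) / s z" if "z < 0" for z
    using s_ge_1[of z] that unfolding h_def g_fun_def s_def[symmetric]
    by (auto simp: field_simps)
  have "h x \<le> h z" if "x \<le> z" for x z
  proof (cases "0 \<le> x")
    case True
    have "(Y + y) / s z \<le> (Y + y) / s x"
      using s_ge_1[of x] s_mono[of x z] True that assms
      by (intro divide_left_mono) auto
    then show ?thesis
      using True that h_nonneg by simp
  next
    case x_neg: False
    show ?thesis
    proof (cases "z < 0")
      case True
      have "(Y - y) / s x \<le> (Y - y) / s z"
        using s_ge_1[of z] s_mono[of z x] True that assms
        by (intro divide_left_mono) auto
      then show ?thesis
        using True x_neg h_neg by simp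
    next
      case False
      have "(Y - y) / s x \<le> Y - y" and "(Y + y) / s z \<le> Y + y"
        using s_ge_1[of x] s_ge_1[of z] assms by (auto simp: divide_le_eq mult_le_cancel_left1)
      then show ?thesis
        using False x_neg h_neg h_nonneg by simp
    qed
  qed
  then show ?thesis
    unfolding h_def s_def by (rule monoI)
qed

theorem mainTheorem1:
  fixes \<alpha> Y y :: real
  assumes "\<alpha> > 0" and "-Y \<le> y" and "y \<le> Y"
  shows "convex_on UNIV (\<lambda>z. sq_loss y (g_fun \<alpha> Y z))"
proof (rule convex_on_realI)
  define s where "s z = sqrt (\<alpha> * \<bar>z\<bar> + 1)" for z
  show "connected (UNIV :: real set)"
    by simp
  show "((\<lambda>z. sq_loss y (g_fun \<alpha> Y z)) has_real_derivative Y * \<alpha> * ((g_fun \<alpha> Y x - y) / s x)) (at x)"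
    for x
    unfolding sq_loss_def s_def using assms(1)
    by (auto intro!: derivative_eq_intros has_real_derivative_g_fun)
  have residual_mono: "mono (\<lambda>z. (g_fun \<alpha> Y z - y) / s z)"
    unfolding s_def using assms by (intro mono_g_fun_residual_over_sqrt) auto
  have "0 \<le> Y * \<alpha>"
    using assms by simp
  show "Y * \<alpha> * ((g_fun \<alpha> Y x - y) / s x) \<le> Y * \<alpha> * ((g_fun \<alpha> Y z - y) / s z)"
    if "x \<le> z" for x z
    using monoD[OF residual_mono that] \<open>0 \<le> Y * \<alpha>\<close> by (rule mult_left_mono)
qed

end
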